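(* Let $N\ge 1$, let $\mathbf{a}_1,\dots,\mathbf{a}_N\in\mathbb{R}^3$ and $\mathbf{x}_G\in\mathbb{R}^3$, set $d_i=\|\mathbf{x}_G-\mathbf{a}_i\|$ and $\mathbf{a}_\ast=\frac1N\sum_{i=1}^N\mathbf{a}_i$, and define $$F_{L2}(\mathbf{x},\lambda)=\frac14\sum_{i=1}^N\bigl(\|\mathbf{x}-\mathbf{a}_i\|^2+\lambda^2-d_i^2\bigr)^2,\qquad \mathbf{x}\in\mathbb{R}^3,\ \lambda\in\mathbb{R}.$$ Assume the vectors $\mathbf{a}_1-\mathbf{a}_\ast,\dots,\mathbf{a}_N-\mathbf{a}_\ast$ span $\mathbb{R}^3$. Then $F_{L2}$ has no stationary point $(\mathbf{x},\lambda)$ with $\lambda\neq0$ and $\mathbf{x}\neq\mathbf{x}_G$; more precisely, if $\lambda\ne0$, $\mathbf{x}\ne\mathbf{x}_G$ and $\frac{\partial F_{L2}}{\partial\lambda}(\mathbf{x},\lambda)=0$, then $\nabla_{\mathbf{x}}F_{L2}(\mathbf{x},\lambda)\neq0$. In particular $F_{L2}$ has no local minima with $\lambda\ne0$ and $\mathbf{x}\ne\mathbf{x}_G$.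
   Context: $F_{L2}$ is the squared-range Time of Arrival least-squares objective for exact distances $d_i$ from known base stations $\mathbf{a}_i$ to an object at $\mathbf{x}_G$, augmented with an additional variable $\lambda$. *)

theory Defs
  imports "HOL-Analysis.Analysis"
begin

definition dist_TOA :: "(nat \<Rightarrow> real^3) \<Rightarrow> real^3 \<Rightarrow> nat \<Rightarrow> real" where
  "dist_TOA a xG i = norm (xG - a i)"

definition a_star :: "nat \<Rightarrow> (nat \<Rightarrow> real^3) \<Rightarrow> real^3" where
  "a_star N a = (1 / real N) *\<^sub>R (\<Sum>i=1..N. a i)"

definition F_L2 :: "nat \<Rightarrow> (nat \<Rightarrow> real^3) \<Rightarrow> real^3 \<Rightarrow> real^3 \<Rightarrow> real \<Rightarrow> real" where
  "F_L2 N a xG x l =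
     (1/4) * (\<Sum>i=1..N. ((norm (x - a i))\<^sup>2 + l\<^sup>2 - (dist_TOA a xG i)\<^sup>2)\<^sup>2)"

end

theory Submission
  imports Defs
begin

text \<open>
  Write \<open>u = x - xG\<close>. Each residual \<open>r\<^sub>i = \<parallel>x - a\<^sub>i\<parallel>\<^sup>2 + \<lambda>\<^sup>2 - d\<^sub>i\<^sup>2\<close> is affine in \<open>a\<^sub>i\<close>,
  namely \<open>K - 2 u \<bullet> a\<^sub>i\<close>. The \<open>\<lambda>\<close>-derivative \<open>\<lambda> \<Sum> r\<^sub>i\<close> vanishes for \<open>\<lambda> \<noteq> 0\<close> only if
  \<open>\<Sum> r\<^sub>i = 0\<close>, which fixes \<open>K\<close> and gives \<open>r\<^sub>i = -2 u \<bullet> (a\<^sub>i - a\<^sub>*)\<close>. Then the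
  derivative of \<open>F_L2\<close> in \<open>x\<close> along \<open>u\<close> equals \<open>2 \<Sum> (u \<bullet> (a\<^sub>i - a\<^sub>*))\<^sup>2\<close>, which is
  positive because the centred stations span the space and \<open>u \<noteq> 0\<close>.
\<close>

lemma TOA_residual_eq:
  fixes x xG p :: "'a::real_inner"
  shows "(norm (x - p))\<^sup>2 + l\<^sup>2 - (norm (xG - p))\<^sup>2
           = (x - xG) \<bullet> (x + xG) + l\<^sup>2 - 2 * ((x - xG) \<bullet> p)"
  unfolding power2_norm_eq_inner
  by (simp add: inner_diff inner_add inner_commute algebra_simps)

lemma TOA_directional_derivative_eq:
  fixes a :: "'i \<Rightarrow> 'a::real_inner" and x xG :: 'a
  assumes I: "finite I" "I \<noteq> {}"
    and residual_sum: "(\<Sum>i\<in>I. (norm (x - a i))\<^sup>2 + l\<^sup>2 - (norm (xG - a i))\<^sup>2) = 0"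
  defines "c \<equiv> (1 / real (card I)) *\<^sub>R (\<Sum>i\<in>I. a i)"
  shows "(\<Sum>i\<in>I. ((norm (x - a i))\<^sup>2 + l\<^sup>2 - (norm (xG - a i))\<^sup>2) * ((x - a i) \<bullet> (x - xG)))
           = 2 * (\<Sum>i\<in>I. ((x - xG) \<bullet> (a i - c))\<^sup>2)"
proof -
  define u where "u = x - xG"
  define K where "K = u \<bullet> (x + xG) + l\<^sup>2"
  define r where "r i = (norm (x - a i))\<^sup>2 + l\<^sup>2 - (norm (xG - a i))\<^sup>2" for i
  have r_affine: "r i = K - 2 * (u \<bullet> a i)" for i
    by (simp add: r_def K_def u_def TOA_residual_eq)
  have sum_r: "(\<Sum>i\<in>I. r i) = 0"
    using residual_sum by (simp add: r_def)
  moreover have "(\<Sum>i\<in>I. r i) = real (card I) * K - 2 * (u \<bullet> (\<Sum>i\<in>I. a i))"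
    by (simp add: r_affine sum_subtractf inner_sum_right sum_distrib_left)
  ultimately have "K = 2 * (u \<bullet> c)"
    using I by (simp add: c_def field_simps)
  hence r_centred: "r i = -2 * (u \<bullet> (a i - c))" for i
    by (simp add: r_affine inner_diff_right)
  have "(\<Sum>i\<in>I. r i * ((x - a i) \<bullet> u))
          = (\<Sum>i\<in>I. r i) * ((x - c) \<bullet> u) - (\<Sum>i\<in>I. r i * ((a i - c) \<bullet> u))"
    by (simp add: sum_distrib_right sum_subtractf[symmetric] inner_diff_left algebra_simps)
  also have "\<dots> = - (\<Sum>i\<in>I. r i * ((a i - c) \<bullet> u))"
    by (simp add: sum_r)
  also have "\<dots> = 2 * (\<Sum>i\<in>I. (u \<bullet> (a i - c))\<^sup>2)"
    by (simp add: r_centred inner_commute power2_eq_square sum_negf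
        sum_distrib_left mult.assoc)
  finally show ?thesis
    by (simp add: r_def u_def)
qed

lemma sum_inner_square_pos_if_span:
  fixes b :: "'i \<Rightarrow> 'a::real_inner"
  assumes "finite I" and "span (b ` I) = UNIV" and "u \<noteq> 0"
  shows "(\<Sum>i\<in>I. (u \<bullet> b i)\<^sup>2) > 0"
proof (rule ccontr)
  assume "\<not> (\<Sum>i\<in>I. (u \<bullet> b i)\<^sup>2) > 0"
  moreover have "(\<Sum>i\<in>I. (u \<bullet> b i)\<^sup>2) \<ge> 0"
    by (intro sum_nonneg zero_le_power2)
  ultimately have "(\<Sum>i\<in>I. (u \<bullet> b i)\<^sup>2) = 0"
    by linarith
  hence "\<forall>i\<in>I. (u \<bullet> b i)\<^sup>2 = 0"
    using sum_nonneg_eq_0_iff[OF \<open>finite I\<close>, of "\<lambda>i. (u \<bullet> b i)\<^sup>2"] by simp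
  have "orthogonal u u"
  proof (rule orthogonal_to_span)
    show "u \<in> span (b ` I)"
      using assms(2) by simp
    show "orthogonal u y" if "y \<in> b ` I" for y
      using that \<open>\<forall>i\<in>I. (u \<bullet> b i)\<^sup>2 = 0\<close> by (auto simp: orthogonal_def)
  qed
  with \<open>u \<noteq> 0\<close> show False
    by (simp add: orthogonal_def)
qed

lemma F_L2_has_real_derivative_lambda:
  "(F_L2 N a xG x has_real_derivative
      l * (\<Sum>i=1..N. (norm (x - a i))\<^sup>2 + l\<^sup>2 - (dist_TOA a xG i)\<^sup>2)) (at l)"
  unfolding F_L2_def
  apply (rule derivative_eq_intros refl)+
  apply (simp add: sum_distrib_left sum_distrib_right)
  apply (rule sum.cong, auto simp: field_simps)
  done

lemma F_L2_has_derivative_x: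
  "((\<lambda>y. F_L2 N a xG y l) has_derivative
      (\<lambda>h. \<Sum>i=1..N. ((norm (x - a i))\<^sup>2 + l\<^sup>2 - (dist_TOA a xG i)\<^sup>2) * ((x - a i) \<bullet> h))) (at x)"
  unfolding F_L2_def power2_norm_eq_inner
  apply (rule derivative_eq_intros refl)+
  apply (simp add: sum_distrib_left inner_commute algebra_simps)
  done

lemma F_L2_no_stationary_point:
  assumes N: "N \<ge> 1"
    and span_centred: "span ((\<lambda>i. a i - a_star N a) ` {1..N}) = UNIV"
    and "l \<noteq> 0" and "x \<noteq> xG"
    and deriv_l: "(F_L2 N a xG x has_real_derivative 0) (at l)"
  shows "\<not> ((\<lambda>y. F_L2 N a xG y l) has_derivative (\<lambda>h. 0)) (at x)"
proof
  assume "((\<lambda>y. F_L2 N a xG y l) has_derivative (\<lambda>h. 0)) (at x)"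
  from has_derivative_unique[OF F_L2_has_derivative_x this]
  have "(\<Sum>i=1..N. ((norm (x - a i))\<^sup>2 + l\<^sup>2 - (dist_TOA a xG i)\<^sup>2) * ((x - a i) \<bullet> (x - xG))) = 0"
    by (rule fun_cong[where x = "x - xG", simplified])
  moreover have "(\<Sum>i=1..N. (norm (x - a i))\<^sup>2 + l\<^sup>2 - (dist_TOA a xG i)\<^sup>2) = 0"
    using DERIV_unique[OF F_L2_has_real_derivative_lambda deriv_l] \<open>l \<noteq> 0\<close> by simp
  ultimately have "(\<Sum>i=1..N. ((x - xG) \<bullet> (a i - a_star N a))\<^sup>2) = 0"
    using N TOA_directional_derivative_eq[of "{1..N}" x a l xG]
    by (simp add: dist_TOA_def a_star_def)
  moreover have "(\<Sum>i=1..N. ((x - xG) \<bullet> (a i - a_star N a))\<^sup>2) > 0"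
    using span_centred \<open>x \<noteq> xG\<close> by (intro sum_inner_square_pos_if_span) auto
  ultimately show False
    by simp
qed

lemma F_L2_local_min_stationary:
  assumes "e > 0"
    and local_min: "\<forall>y m. dist (y, m) (x, l) < e \<longrightarrow> F_L2 N a xG x l \<le> F_L2 N a xG y m"
  shows "(F_L2 N a xG x has_real_derivative 0) (at l)"
    and "((\<lambda>y. F_L2 N a xG y l) has_derivative (\<lambda>h. 0)) (at x)"
proof -
  have "\<forall>m. \<bar>l - m\<bar> < e \<longrightarrow> F_L2 N a xG x l \<le> F_L2 N a xG x m"
    using local_min by (auto simp: dist_Pair_Pair dist_real_def abs_minus_commute)
  from DERIV_local_min[OF F_L2_has_real_derivative_lambda \<open>e > 0\<close> this]
  show "(F_L2 N a xG x has_real_derivative 0) (at l)"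
    using F_L2_has_real_derivative_lambda[of N a xG x l] by (simp only:)
  have "\<forall>y. dist y x < e \<longrightarrow> F_L2 N a xG x l \<le> F_L2 N a xG y l"
    using local_min by (simp add: dist_Pair_Pair)
  hence "eventually (\<lambda>y. F_L2 N a xG x l \<le> F_L2 N a xG y l) (at x)"
    unfolding eventually_at using \<open>e > 0\<close> by blast
  from has_derivative_local_min[OF F_L2_has_derivative_x this]
  show "((\<lambda>y. F_L2 N a xG y l) has_derivative (\<lambda>h. 0)) (at x)"
    using F_L2_has_derivative_x[of N a xG l x] by simp
qed

theorem mainTheorem2:
  fixes N :: nat and a :: "nat \<Rightarrow> real^3" and xG :: "real^3"
  assumes "N \<ge> 1"
    and "span ((\<lambda>i. a i - a_star N a) ` {1..N}) = UNIV"
  shows "(\<forall>x l. l \<noteq> 0 \<and> x \<noteq> xG \<and> (F_L2 N a xG x has_real_derivative 0) (at l)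
            \<longrightarrow> \<not> (((\<lambda>y. F_L2 N a xG y l) has_derivative (\<lambda>h. 0)) (at x)))
       \<and> (\<forall>x l. l \<noteq> 0 \<and> x \<noteq> xG \<longrightarrow>
            \<not> (\<exists>e>0. \<forall>y m. dist (y, m) (x, l) < e \<longrightarrow> F_L2 N a xG x l \<le> F_L2 N a xG y m))"
proof (intro conjI allI impI notI)
  show False if "l \<noteq> 0 \<and> x \<noteq> xG \<and> (F_L2 N a xG x has_real_derivative 0) (at l)"
      and "((\<lambda>y. F_L2 N a xG y l) has_derivative (\<lambda>h. 0)) (at x)" for x l
    using F_L2_no_stationary_point[OF assms] that by blast
  show False if "l \<noteq> 0 \<and> x \<noteq> xG"
      and "\<exists>e>0. \<forall>y m. dist (y, m) (x, l) < e \<longrightarrow> F_L2 N a xG x l \<le> F_L2 N a xG y m" for x l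
    using F_L2_no_stationary_point[OF assms] F_L2_local_min_stationary that by metis
qed

end
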